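(* Let $U$ be the transition matrix of a QRW on the non-negative integers with arbitrary non trivial coins, with associated orthogonality measure $\mu$, moments $\mu_n=\int_{\mathbb T}z^nd\mu$, and associated column vector of orthonormal Laurent polynomials $X=(1,X_1,X_2,\dots)^T$. Suppose that for some sequence of phases $e^{i\theta_n}$, $e^{-i\theta_n}U^n$ has a non null weak limit $U^\infty$ as $n\to\infty$. Then $\mu$ has a mass point $z_0\in\mathbb T$ such that $e^{i(\theta_{n+1}-\theta_n)}\to z_0$, and \[U^\infty=\mu_\infty X(z_0)X(z_0)^\dagger,\qquad \mu_\infty=\lim_{n\to\infty}e^{-i\theta_n}\mu_n .\] Furthermore $\lim_{n\to\infty}e^{-i\theta_n}z_0^n=\mu_\infty/\mu(\{z_0\})$, so that $\lim_{n\to\infty}z_0^{-n}\mu_n=\mu(\{z_0\})$ and $z_0^{-n}U^n$ converges weakly to \[\mu(\{z_0\})X(z_0)X(z_0)^\dagger=\frac{1}{\|X(z_0)\|^2}X(z_0)X(z_0)^\dagger,\] which is the orthogonal projection onto the eigenspace of $U$ associated with the eigenvalue $z_0$.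
   Context: Coins: for each $i\ge0$, $C_i=\begin{pmatrix}c^i_{11}&c^i_{12}\\ c^i_{21}&c^i_{22}\end{pmatrix}$ is a $2\times2$ unitary matrix with $c^i_{11}\ne0$ (non trivial). Number the pure states $|0\uparrow\rangle,|0\downarrow\rangle,|1\uparrow\rangle,|1\downarrow\rangle,\dots$ as $0,1,2,3,\dots$. The unitary transition matrix $U=(U_{j,k})_{j,k\ge0}$ ($U_{j,k}$ = amplitude of the one-step transition from state $j$ to state $k$) has as only non-zero entries: $U_{2i,2i+2}=c^i_{11}$, $U_{2i+1,2i+2}=c^i_{12}$ for $i\ge0$; $U_{2i,2i-1}=c^i_{21}$, $U_{2i+1,2i-1}=c^i_{22}$ for $i\ge1$; $U_{0,0}=c^0_{21}$, $U_{1,0}=c^0_{22}$. The orthogonality measure $\mu$ is the unique probability measure on the unit circle $\mathbb T$ with $\int_{\mathbb T}z^nd\mu=(U^n)_{0,0}$ for all $n\in\mathbb Z$. The orthonormal Laurent polynomials $X_j$ are the unique Laurent polynomials with $X_0=1$ and $\sum_l U_{j,l}X_l(z)=zX_j(z)$ for all $j\ge0$; $X(z)$ is the column vector $(X_0(z),X_1(z),\dots)^T$ and $X(z)^\dagger$ its conjugate transpose. A mass point of $\mu$ is a point $z_0$ with $\mu(\{z_0\})>0$. A sequence of uniformly bounded matrices converges weakly if it converges entrywise. *)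

theory Defs
  imports "HOL-Probability.Probability"
begin

type_synonym cmat = "nat \<Rightarrow> nat \<Rightarrow> complex"

text \<open>Coins: c i r s is the entry c^i_{rs}, r,s in {1,2}. Unitarity: C C^dagger = I.\<close>
definition unitary_coin :: "(nat \<Rightarrow> nat \<Rightarrow> complex) \<Rightarrow> bool" where
  "unitary_coin C \<longleftrightarrow>
     (\<forall>r\<in>{1,2}. \<forall>s\<in>{1,2}. (\<Sum>t\<in>{1,2::nat}. C r t * cnj (C s t)) = (if r = s then 1 else 0))"

text \<open>Transition matrix of the QRW on the non-negative integers; states numbered
  |i up> = 2i, |i down> = 2i+1.\<close>
definition qrw_U :: "(nat \<Rightarrow> nat \<Rightarrow> nat \<Rightarrow> complex) \<Rightarrow> cmat" where
  "qrw_U c j k =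
     (let i = j div 2 in
      if even j then
        (if k = j + 2 then c i 1 1
         else if i \<ge> 1 \<and> k = j - 1 then c i 2 1
         else if i = 0 \<and> k = 0 then c 0 2 1
         else 0)
      else
        (if k = j + 1 then c i 1 2
         else if i \<ge> 1 \<and> k = j - 2 then c i 2 2
         else if i = 0 \<and> k = 0 then c 0 2 2
         else 0))"

definition mat_mult :: "cmat \<Rightarrow> cmat \<Rightarrow> cmat" where
  "mat_mult A B j k = (\<Sum>\<^sub>\<infinity>l. A j l * B l k)"

definition mat_id :: cmat where
  "mat_id j k = (if j = k then 1 else 0)"

definition mat_adj :: "cmat \<Rightarrow> cmat" where
  "mat_adj A j k = cnj (A k j)"

primrec mat_pow :: "cmat \<Rightarrow> nat \<Rightarrow> cmat" where
  "mat_pow A 0 = mat_id"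
| "mat_pow A (Suc n) = mat_mult (mat_pow A n) A"

text \<open>Integer powers of the unitary matrix U (U^{-1} = U^dagger).\<close>
definition mat_ipow :: "cmat \<Rightarrow> int \<Rightarrow> cmat" where
  "mat_ipow A n = (if n \<ge> 0 then mat_pow A (nat n) else mat_pow (mat_adj A) (nat (- n)))"

definition in_l2 :: "(nat \<Rightarrow> complex) \<Rightarrow> bool" where
  "in_l2 v \<longleftrightarrow> summable (\<lambda>k. (cmod (v k))\<^sup>2)"

definition mat_apply :: "cmat \<Rightarrow> (nat \<Rightarrow> complex) \<Rightarrow> (nat \<Rightarrow> complex)" where
  "mat_apply A v j = (\<Sum>\<^sub>\<infinity>k. A j k * v k)"

definition eigenspace_l2 :: "cmat \<Rightarrow> complex \<Rightarrow> (nat \<Rightarrow> complex) set" where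
  "eigenspace_l2 A z = {v. in_l2 v \<and> mat_apply A v = (\<lambda>j. z * v j)}"

definition is_orth_proj_onto :: "cmat \<Rightarrow> (nat \<Rightarrow> complex) set \<Rightarrow> bool" where
  "is_orth_proj_onto P S \<longleftrightarrow>
     (\<forall>v. in_l2 v \<longrightarrow> mat_apply P v \<in> S \<and>
        (\<forall>w\<in>S. (\<Sum>\<^sub>\<infinity>j. (v j - mat_apply P v j) * cnj (w j)) = 0))"

end

theory Submission
  imports Defs
begin

text \<open>
  Let \<open>phase n = exp (-i \<theta> n)\<close>. The limit of \<open>phase n * U\<^sup>n\<^sup>+\<^sup>1\<close> is both \<open>Uinf * U\<close> and
  \<open>U * Uinf\<close>, while \<open>phase n = exp (i (\<theta> (n+1) - \<theta> n)) * phase (n+1)\<close>; hence the phase ratios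
  converge to some \<open>z0\<close> and \<open>Uinf * U = U * Uinf = z0 * Uinf\<close>. As \<open>U\<close> is banded and the coin
  entries \<open>c\<^sub>1\<^sub>1\<close>, \<open>c\<^sub>2\<^sub>2\<close> do not vanish, eigenvectors of \<open>U\<close> (on either side) are determined by
  their first entry, and by unitarity of the coins the conjugate of a right eigenvector with
  \<open>|z| = 1\<close> is a left eigenvector. So the columns of \<open>Uinf\<close> are multiples of \<open>X(z0)\<close>, its rows
  multiples of \<open>X(z0)\<^sup>\<dagger>\<close>, and \<open>Uinf = \<mu>\<^sub>\<infinity> X(z0) X(z0)\<^sup>\<dagger>\<close>.

  The polynomials \<open>((1 + z cnj z0) / 2)\<^sup>N\<close> converge boundedly on the circle to the indicator
  of \<open>{z0}\<close>; pairing them with the moments gives \<open>phase n * z0\<^sup>n * \<mu>{z0} \<longlongrightarrow> \<mu>\<^sub>\<infinity> \<noteq> 0\<close>, so \<open>z0\<close>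
  is a mass point and the other limits follow by division. Finally the column
  \<open>z0\<^sup>-\<^sup>m U\<^sup>m e\<^sub>0\<close> has norm one, pairs to \<open>1\<close> with \<open>X(z0)\<close> and tends to \<open>\<mu>{z0} X(z0)\<close>; Cauchy--Schwarz
  on its tail gives \<open>\<mu>{z0} \<parallel>X(z0)\<parallel>\<^sup>2 = 1\<close>, which makes \<open>\<mu>{z0} X X\<^sup>\<dagger>\<close> the orthogonal projection
  onto the (one-dimensional) eigenspace.
\<close>

text \<open>\<open>left_state i\<close> is the state reached from site \<open>i\<close> by a step to the left, i.e.
  \<open>|i-1,\<down>\<rangle>\<close>; at the reflecting boundary site \<open>0\<close> moves into \<open>|0,\<up>\<rangle>\<close> instead.\<close>

definition left_state :: "nat \<Rightarrow> nat" where
  "left_state i = (if i = 0 then 0 else 2 * i - 1)"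

lemma left_state_eq_iff: "left_state i = left_state i' \<longleftrightarrow> i = i'"
  unfolding left_state_def by auto

lemma left_state_neq_right: "left_state i \<noteq> Suc (Suc (2 * i'))"
  unfolding left_state_def by presburger

lemma left_state_le: "left_state i \<le> 2 * i"
  unfolding left_state_def by auto

lemma left_state_ge: "2 * i \<le> left_state i + 1"
  unfolding left_state_def by auto

lemma left_state_Suc: "left_state (Suc i) = 2 * i + 1"
  unfolding left_state_def by simp

lemma nat_parity_cases: fixes j :: nat obtains i where "j = 2 * i" | i where "j = 2 * i + 1"
  by (metis oddE evenE)

lemma nat_state_cases: fixes k :: nat obtains i where "k = 2 * i + 2" | i where "k = left_state i"
proof (cases k rule: nat_parity_cases)
  case (1 i)
  show ?thesis
  proof (cases i)
    case 0
    then show ?thesis using that(2)[of 0] 1 by (simp add: left_state_def)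
  next
    case (Suc i')
    then show ?thesis using that(1)[of i'] 1 by simp
  qed
next
  case (2 i)
  then show ?thesis using that(2)[of "i + 1"] by (simp add: left_state_def)
qed

lemma qrw_U_up_row:
  "qrw_U c (2 * i) l = (if l = 2 * i + 2 then c i 1 1 else 0) + (if l = left_state i then c i 2 1 else 0)"
  unfolding qrw_U_def Let_def left_state_def by auto

lemma qrw_U_down_row:
  "qrw_U c (Suc (2 * i)) l = (if l = 2 * i + 2 then c i 1 2 else 0) + (if l = left_state i then c i 2 2 else 0)"
  unfolding qrw_U_def Let_def left_state_def by auto

lemma qrw_U_right_col:
  "qrw_U c j (Suc (Suc (2 * i))) = (if j = 2 * i then c i 1 1 else 0) + (if j = 2 * i + 1 then c i 1 2 else 0)"
  by (cases j rule: nat_parity_cases)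
    (auto simp: qrw_U_up_row qrw_U_down_row left_state_neq_right[symmetric])

lemma qrw_U_left_col:
  "qrw_U c j (left_state i) = (if j = 2 * i then c i 2 1 else 0) + (if j = 2 * i + 1 then c i 2 2 else 0)"
proof (cases j rule: nat_parity_cases)
  case (1 i')
  then show ?thesis by (cases "i' = i") (simp_all add: qrw_U_up_row left_state_neq_right left_state_eq_iff)
next
  case (2 i')
  then show ?thesis by (cases "i' = i") (simp_all add: qrw_U_down_row left_state_neq_right left_state_eq_iff)
qed

lemma qrw_U_eq_0_right: "j + 2 < l \<Longrightarrow> qrw_U c j l = 0"
proof (cases j rule: nat_parity_cases)
  case (1 i)
  then show "j + 2 < l \<Longrightarrow> ?thesis" using left_state_le[of i] by (simp add: qrw_U_up_row)
next
  case (2 i)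
  then show "j + 2 < l \<Longrightarrow> ?thesis" using left_state_le[of i] by (simp add: qrw_U_down_row)
qed

lemma qrw_U_eq_0_left: "k + 2 < j \<Longrightarrow> qrw_U c j k = 0"
  by (cases j rule: nat_parity_cases) (auto simp: qrw_U_up_row qrw_U_down_row left_state_def)

lemma infsum_eq_sum_atMost:
  fixes f :: "nat \<Rightarrow> 'a::{comm_monoid_add,t2_space}"
  assumes "\<And>l. N < l \<Longrightarrow> f l = 0"
  shows "(\<Sum>\<^sub>\<infinity>l. f l) = (\<Sum>l\<le>N. f l)"
proof -
  have "(\<Sum>\<^sub>\<infinity>l. f l) = infsum f {..N}"
    by (rule infsum_cong_neutral) (use assms in auto)
  then show ?thesis by simp
qed

lemma sum_qrw_U_up_row:
  assumes "2 * i + 2 \<le> N"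
  shows "(\<Sum>l\<le>N. qrw_U c (2 * i) l * v l) = c i 1 1 * v (2 * i + 2) + c i 2 1 * v (left_state i)"
  using assms left_state_le[of i]
  by (simp add: qrw_U_up_row distrib_right sum.distrib if_distrib[of "\<lambda>x. x * _"] cong: if_cong)

lemma sum_qrw_U_down_row:
  assumes "2 * i + 2 \<le> N"
  shows "(\<Sum>l\<le>N. qrw_U c (2 * i + 1) l * v l) = c i 1 2 * v (2 * i + 2) + c i 2 2 * v (left_state i)"
  using assms left_state_le[of i]
  by (simp add: qrw_U_down_row distrib_right sum.distrib if_distrib[of "\<lambda>x. x * _"] cong: if_cong)

lemma sum_qrw_U_right_col:
  assumes "2 * i + 1 \<le> N"
  shows "(\<Sum>j\<le>N. r j * qrw_U c j (2 * i + 2)) = r (2 * i) * c i 1 1 + r (2 * i + 1) * c i 1 2"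
  using assms
  by (simp add: qrw_U_right_col distrib_left sum.distrib if_distrib[of "\<lambda>x. _ * x"] cong: if_cong)

lemma sum_qrw_U_left_col:
  assumes "2 * i + 1 \<le> N"
  shows "(\<Sum>j\<le>N. r j * qrw_U c j (left_state i)) = r (2 * i) * c i 2 1 + r (2 * i + 1) * c i 2 2"
  using assms
  by (simp add: qrw_U_left_col distrib_left sum.distrib if_distrib[of "\<lambda>x. _ * x"] cong: if_cong)

lemma infsum_qrw_U_row: "(\<Sum>\<^sub>\<infinity>l. qrw_U c j l * v l) = (\<Sum>l\<le>j + 2. qrw_U c j l * v l)"
  by (rule infsum_eq_sum_atMost) (simp add: qrw_U_eq_0_right)

lemma mat_pow_qrw_Suc_right:
  "mat_pow (qrw_U c) (Suc n) j k = (\<Sum>l\<le>k + 2. mat_pow (qrw_U c) n j l * qrw_U c l k)"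
  unfolding mat_pow.simps mat_mult_def by (rule infsum_eq_sum_atMost) (simp add: qrw_U_eq_0_left)

lemma mat_pow_qrw_Suc_left:
  "mat_pow (qrw_U c) (Suc n) j k = (\<Sum>l\<le>j + 2. qrw_U c j l * mat_pow (qrw_U c) n l k)"
proof (induction n arbitrary: j k)
  case 0
  have "(\<Sum>l\<le>k + 2. mat_id j l * qrw_U c l k) = qrw_U c j k"
    by (simp add: mat_id_def if_distrib[of "\<lambda>x. x * _"] qrw_U_eq_0_left cong: if_cong)
  moreover have "(\<Sum>l\<le>j + 2. qrw_U c j l * mat_id l k) = qrw_U c j k"
    by (simp add: mat_id_def if_distrib[of "\<lambda>x. _ * x"] qrw_U_eq_0_right cong: if_cong)
  ultimately show ?case by (simp only: mat_pow_qrw_Suc_right) simp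
next
  case (Suc n)
  have "mat_pow (qrw_U c) (Suc (Suc n)) j k
      = (\<Sum>m\<le>k + 2. (\<Sum>l\<le>j + 2. qrw_U c j l * mat_pow (qrw_U c) n l m) * qrw_U c m k)"
    by (subst mat_pow_qrw_Suc_right) (simp only: Suc)
  also have "\<dots> = (\<Sum>l\<le>j + 2. qrw_U c j l * (\<Sum>m\<le>k + 2. mat_pow (qrw_U c) n l m * qrw_U c m k))"
    by (simp only: sum_distrib_right sum_distrib_left mult.assoc) (rule sum.swap)
  also have "\<dots> = (\<Sum>l\<le>j + 2. qrw_U c j l * mat_pow (qrw_U c) (Suc n) l k)"
    by (simp only: mat_pow_qrw_Suc_right)
  finally show ?case .
qed

lemma mat_pow_qrw_eq_0_left: "k + 2 * n < j \<Longrightarrow> mat_pow (qrw_U c) n j k = 0"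
proof (induction n arbitrary: j)
  case 0
  then show ?case by (simp add: mat_id_def)
next
  case (Suc n)
  have "qrw_U c j l * mat_pow (qrw_U c) n l k = 0" for l
    using Suc by (cases "l + 2 < j") (simp_all add: qrw_U_eq_0_left)
  then show ?case unfolding mat_pow_qrw_Suc_left by (intro sum.neutral) blast
qed

lemma sum_even_odd_pairs:
  fixes f :: "nat \<Rightarrow> 'a::comm_monoid_add"
  shows "(\<Sum>j<2 * N. f j) = (\<Sum>i<N. f (2 * i) + f (2 * i + 1))"
  by (induction N) (auto simp: sum.distrib ac_simps)

lemma sum_right_left_states:
  fixes g :: "nat \<Rightarrow> real"
  assumes "N \<ge> 1"
  shows "(\<Sum>i<N. g (2 * i + 2) + g (left_state i)) + g (2 * N - 1) = (\<Sum>l\<le>2 * N. g l)"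
  using assms
proof (induction N rule: nat_induct_at_least)
  case base
  have "{..2::nat} = {0, 1, 2}" by auto
  then show ?case by (simp add: left_state_def eval_nat_numeral)
next
  case (Suc N)
  then have "left_state N = 2 * N - 1" by (simp add: left_state_def)
  moreover have "(\<Sum>l\<le>2 * Suc N. g l) = (\<Sum>l\<le>2 * N. g l) + g (2 * N + 1) + g (2 * N + 2)"
    by (simp add: add.assoc)
  ultimately show ?case using Suc.IH by simp
qed

lemma unitary_system_cnj:
  fixes a b a' b' q1 q2 p1 p2 z :: complex
  assumes "a * q1 + a' * q2 = z * p1" and "b * q1 + b' * q2 = z * p2"
    and "a * cnj a + b * cnj b = 1" and "a' * cnj a + b' * cnj b = 0"
    and "z * cnj z = 1"
  shows "cnj p1 * a + cnj p2 * b = z * cnj q1"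
proof -
  have "z * (p1 * cnj a + p2 * cnj b) = (a * q1 + a' * q2) * cnj a + (b * q1 + b' * q2) * cnj b"
    by (simp add: assms(1,2) algebra_simps)
  also have "\<dots> = q1 * (a * cnj a + b * cnj b) + q2 * (a' * cnj a + b' * cnj b)"
    by algebra
  finally have "z * (p1 * cnj a + p2 * cnj b) = q1" using assms(3,4) by simp
  then have "cnj z * (cnj p1 * a + cnj p2 * b) = cnj q1"
    by (metis complex_cnj_add complex_cnj_cnj complex_cnj_mult)
  then have "z * cnj z * (cnj p1 * a + cnj p2 * b) = z * cnj q1" by (metis mult.assoc)
  then show ?thesis using assms(5) by simp
qed

locale qrw =
  fixes c :: "nat \<Rightarrow> nat \<Rightarrow> nat \<Rightarrow> complex"
  assumes coins: "\<And>i. unitary_coin (c i)"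
    and nontriv: "\<And>i. c i 1 1 \<noteq> 0"
begin

abbreviation U where "U \<equiv> qrw_U c"

lemma coin_unitary:
  "c i 1 1 * cnj (c i 1 1) + c i 1 2 * cnj (c i 1 2) = 1"
  "c i 2 1 * cnj (c i 2 1) + c i 2 2 * cnj (c i 2 2) = 1"
  "c i 1 1 * cnj (c i 2 1) + c i 1 2 * cnj (c i 2 2) = 0"
  "c i 2 1 * cnj (c i 1 1) + c i 2 2 * cnj (c i 1 2) = 0"
  using coins[of i] unfolding unitary_coin_def by (auto simp: numeral_2_eq_2)

lemma coin_22_nonzero: "c i 2 2 \<noteq> 0"
proof
  assume "c i 2 2 = 0"
  then have "c i 2 1 \<noteq> 0" and "c i 1 1 * cnj (c i 2 1) = 0"
    using coin_unitary(2,3)[of i] by auto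
  then show False using nontriv[of i] by simp
qed

lemma coin_norm_preserving:
  "(cmod (c i 1 1 * a + c i 2 1 * b))\<^sup>2 + (cmod (c i 1 2 * a + c i 2 2 * b))\<^sup>2 = (cmod a)\<^sup>2 + (cmod b)\<^sup>2"
proof -
  define x where "x = c i 1 1 * a + c i 2 1 * b"
  define y where "y = c i 1 2 * a + c i 2 2 * b"
  have "x * cnj x + y * cnj y = (c i 1 1 * cnj (c i 1 1) + c i 1 2 * cnj (c i 1 2)) * (a * cnj a)
     + (c i 2 1 * cnj (c i 2 1) + c i 2 2 * cnj (c i 2 2)) * (b * cnj b)
     + (c i 1 1 * cnj (c i 2 1) + c i 1 2 * cnj (c i 2 2)) * (a * cnj b)
     + (c i 2 1 * cnj (c i 1 1) + c i 2 2 * cnj (c i 1 2)) * (b * cnj a)"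
    unfolding x_def y_def complex_cnj_add complex_cnj_mult by algebra
  also have "\<dots> = a * cnj a + b * cnj b" by (simp only: coin_unitary) simp
  finally have "complex_of_real ((cmod x)\<^sup>2 + (cmod y)\<^sup>2) = complex_of_real ((cmod a)\<^sup>2 + (cmod b)\<^sup>2)"
    by (simp only: of_real_add complex_norm_square)
  then show ?thesis unfolding x_def y_def by (simp only: of_real_eq_iff)
qed

definition right_eigvec :: "complex \<Rightarrow> (nat \<Rightarrow> complex) \<Rightarrow> bool" where
  "right_eigvec z v \<longleftrightarrow> (\<forall>i.
     c i 1 1 * v (2 * i + 2) + c i 2 1 * v (left_state i) = z * v (2 * i) \<and>
     c i 1 2 * v (2 * i + 2) + c i 2 2 * v (left_state i) = z * v (2 * i + 1))"

definition left_eigvec :: "complex \<Rightarrow> (nat \<Rightarrow> complex) \<Rightarrow> bool" where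
  "left_eigvec z r \<longleftrightarrow> (\<forall>i.
     r (2 * i) * c i 1 1 + r (2 * i + 1) * c i 1 2 = z * r (2 * i + 2) \<and>
     r (2 * i) * c i 2 1 + r (2 * i + 1) * c i 2 2 = z * r (left_state i))"

lemma right_eigvec_iff: "right_eigvec z v \<longleftrightarrow> (\<forall>j. (\<Sum>l\<le>j + 2. U j l * v l) = z * v j)"
proof
  assume v: "right_eigvec z v"
  show "\<forall>j. (\<Sum>l\<le>j + 2. U j l * v l) = z * v j"
  proof
    fix j
    show "(\<Sum>l\<le>j + 2. U j l * v l) = z * v j"
    proof (cases j rule: nat_parity_cases)
      case (1 i)
      then show ?thesis using v sum_qrw_U_up_row[of i "2 * i + 2" c v] unfolding right_eigvec_def by simp
    next
      case (2 i)
      then show ?thesis using v sum_qrw_U_down_row[of i "2 * i + 1 + 2" c v] unfolding right_eigvec_def by simp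
    qed
  qed
next
  assume h: "\<forall>j. (\<Sum>l\<le>j + 2. U j l * v l) = z * v j"
  show "right_eigvec z v"
    unfolding right_eigvec_def
  proof
    fix i
    show "c i 1 1 * v (2 * i + 2) + c i 2 1 * v (left_state i) = z * v (2 * i) \<and>
        c i 1 2 * v (2 * i + 2) + c i 2 2 * v (left_state i) = z * v (2 * i + 1)"
      using h[rule_format, of "2 * i"] h[rule_format, of "2 * i + 1"]
        sum_qrw_U_up_row[of i "2 * i + 2" c v] sum_qrw_U_down_row[of i "2 * i + 1 + 2" c v]
      by simp
  qed
qed

lemma left_eigvec_iff: "left_eigvec z r \<longleftrightarrow> (\<forall>k. (\<Sum>j\<le>k + 2. r j * U j k) = z * r k)"
proof
  assume r: "left_eigvec z r"
  show "\<forall>k. (\<Sum>j\<le>k + 2. r j * U j k) = z * r k"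
  proof
    fix k
    show "(\<Sum>j\<le>k + 2. r j * U j k) = z * r k"
    proof (cases k rule: nat_state_cases)
      case (1 i)
      then show ?thesis using r sum_qrw_U_right_col[of i "2 * i + 2 + 2" r c] unfolding left_eigvec_def by simp
    next
      case (2 i)
      then show ?thesis
        using r sum_qrw_U_left_col[of i "left_state i + 2" r c] left_state_ge[of i]
        unfolding left_eigvec_def by simp
    qed
  qed
next
  assume h: "\<forall>k. (\<Sum>j\<le>k + 2. r j * U j k) = z * r k"
  show "left_eigvec z r"
    unfolding left_eigvec_def
  proof
    fix i
    show "r (2 * i) * c i 1 1 + r (2 * i + 1) * c i 1 2 = z * r (2 * i + 2) \<and>
        r (2 * i) * c i 2 1 + r (2 * i + 1) * c i 2 2 = z * r (left_state i)"
      using h[rule_format, of "2 * i + 2"] h[rule_format, of "left_state i"] left_state_ge[of i]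
        sum_qrw_U_right_col[of i "2 * i + 2 + 2" r c] sum_qrw_U_left_col[of i "left_state i + 2" r c]
      by simp
  qed
qed

lemma right_eigvec_diff:
  assumes "right_eigvec z v" "right_eigvec z w"
  shows "right_eigvec z (\<lambda>j. v j - a * w j)"
  unfolding right_eigvec_def
proof
  fix i
  have "c i 1 1 * v (2 * i + 2) + c i 2 1 * v (left_state i) = z * v (2 * i)"
    "c i 1 2 * v (2 * i + 2) + c i 2 2 * v (left_state i) = z * v (2 * i + 1)"
    "c i 1 1 * w (2 * i + 2) + c i 2 1 * w (left_state i) = z * w (2 * i)"
    "c i 1 2 * w (2 * i + 2) + c i 2 2 * w (left_state i) = z * w (2 * i + 1)"
    using assms unfolding right_eigvec_def by blast+
  then show "c i 1 1 * (v (2 * i + 2) - a * w (2 * i + 2)) + c i 2 1 * (v (left_state i) - a * w (left_state i))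
        = z * (v (2 * i) - a * w (2 * i)) \<and>
      c i 1 2 * (v (2 * i + 2) - a * w (2 * i + 2)) + c i 2 2 * (v (left_state i) - a * w (left_state i))
        = z * (v (2 * i + 1) - a * w (2 * i + 1))"
    by (simp add: right_diff_distrib) algebra
qed

lemma left_eigvec_diff:
  assumes "left_eigvec z v" "left_eigvec z w"
  shows "left_eigvec z (\<lambda>j. v j - a * w j)"
  unfolding left_eigvec_def
proof
  fix i
  have "v (2 * i) * c i 1 1 + v (2 * i + 1) * c i 1 2 = z * v (2 * i + 2)"
    "v (2 * i) * c i 2 1 + v (2 * i + 1) * c i 2 2 = z * v (left_state i)"
    "w (2 * i) * c i 1 1 + w (2 * i + 1) * c i 1 2 = z * w (2 * i + 2)"
    "w (2 * i) * c i 2 1 + w (2 * i + 1) * c i 2 2 = z * w (left_state i)"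
    using assms unfolding left_eigvec_def by blast+
  then show "(v (2 * i) - a * w (2 * i)) * c i 1 1 + (v (2 * i + 1) - a * w (2 * i + 1)) * c i 1 2
        = z * (v (2 * i + 2) - a * w (2 * i + 2)) \<and>
      (v (2 * i) - a * w (2 * i)) * c i 2 1 + (v (2 * i + 1) - a * w (2 * i + 1)) * c i 2 2
        = z * (v (left_state i) - a * w (left_state i))"
    by (simp add: left_diff_distrib) algebra
qed

lemma right_eigvec_eq_0:
  assumes "z \<noteq> 0" "right_eigvec z d" "d 0 = 0"
  shows "d j = 0"
proof -
  have "d (2 * i) = 0 \<and> d (left_state i) = 0" for i
  proof (induction i)
    case 0
    then show ?case using assms(3) by (simp add: left_state_def)
  next
    case (Suc i)
    have "c i 1 1 * d (2 * i + 2) + c i 2 1 * d (left_state i) = z * d (2 * i)"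
      and "c i 1 2 * d (2 * i + 2) + c i 2 2 * d (left_state i) = z * d (2 * i + 1)"
      using assms(2) unfolding right_eigvec_def by blast+
    with Suc have "d (2 * i + 2) = 0" and "d (2 * i + 1) = 0"
      using nontriv[of i] assms(1) by auto
    then show ?case by (simp add: left_state_Suc)
  qed
  note even_and_left = this
  show ?thesis
  proof (cases j rule: nat_parity_cases)
    case (1 i)
    then show ?thesis using even_and_left[of i] by simp
  next
    case (2 i)
    then show ?thesis using even_and_left[of "Suc i"] by (simp add: left_state_Suc)
  qed
qed

lemma left_eigvec_eq_0:
  assumes "z \<noteq> 0" "left_eigvec z d" "d 0 = 0"
  shows "d j = 0"
proof -
  have "d (2 * i) = 0 \<and> d (2 * i + 1) = 0" for i
  proof (induction i)
    case 0
    have "d (2 * 0) * c 0 2 1 + d (2 * 0 + 1) * c 0 2 2 = z * d (left_state 0)"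
      using assms(2) unfolding left_eigvec_def by blast
    then show ?case using assms(3) coin_22_nonzero[of 0] by (simp add: left_state_def)
  next
    case (Suc i)
    have e1: "d (2 * i) * c i 1 1 + d (2 * i + 1) * c i 1 2 = z * d (2 * i + 2)"
      and e2: "d (2 * Suc i) * c (Suc i) 2 1 + d (2 * Suc i + 1) * c (Suc i) 2 2 = z * d (left_state (Suc i))"
      using assms(2) unfolding left_eigvec_def by blast+
    from e1 Suc have "d (2 * Suc i) = 0" using assms(1) by simp
    with e2 Suc have "d (2 * Suc i + 1) * c (Suc i) 2 2 = 0" by (simp add: left_state_Suc)
    then have "d (2 * Suc i + 1) = 0" using coin_22_nonzero[of "Suc i"] by simp
    with \<open>d (2 * Suc i) = 0\<close> show ?case by simp
  qed
  then show ?thesis by (cases j rule: nat_parity_cases) blast+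
qed

lemma right_eigvec_unique:
  assumes "z \<noteq> 0" "right_eigvec z v" "right_eigvec z x" "x 0 = 1"
  shows "v j = v 0 * x j"
  using right_eigvec_eq_0[OF assms(1) right_eigvec_diff[OF assms(2,3)], of "v 0" j] assms(4) by simp

lemma left_eigvec_unique:
  assumes "z \<noteq> 0" "left_eigvec z v" "left_eigvec z x" "x 0 = 1"
  shows "v j = v 0 * x j"
  using left_eigvec_eq_0[OF assms(1) left_eigvec_diff[OF assms(2,3)], of "v 0" j] assms(4) by simp

lemma right_eigvec_cnj:
  assumes "cmod z = 1" "right_eigvec z x"
  shows "left_eigvec z (\<lambda>j. cnj (x j))"
  unfolding left_eigvec_def
proof
  fix i
  have z: "z * cnj z = 1" using complex_norm_square[of z] assms(1) by simp
  have e1: "c i 1 1 * x (2 * i + 2) + c i 2 1 * x (left_state i) = z * x (2 * i)"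
    and e2: "c i 1 2 * x (2 * i + 2) + c i 2 2 * x (left_state i) = z * x (2 * i + 1)"
    using assms(2) unfolding right_eigvec_def by blast+
  have e1': "c i 2 1 * x (left_state i) + c i 1 1 * x (2 * i + 2) = z * x (2 * i)"
    and e2': "c i 2 2 * x (left_state i) + c i 1 2 * x (2 * i + 2) = z * x (2 * i + 1)"
    using e1 e2 by (simp_all only: add.commute)
  have "cnj (x (2 * i)) * c i 1 1 + cnj (x (2 * i + 1)) * c i 1 2 = z * cnj (x (2 * i + 2))"
    by (rule unitary_system_cnj[OF e1 e2 coin_unitary(1) coin_unitary(4) z])
  moreover have "cnj (x (2 * i)) * c i 2 1 + cnj (x (2 * i + 1)) * c i 2 2 = z * cnj (x (left_state i))"
    by (rule unitary_system_cnj[OF e1' e2' coin_unitary(2) coin_unitary(3) z])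
  ultimately show "cnj (x (2 * i)) * c i 1 1 + cnj (x (2 * i + 1)) * c i 1 2 = z * cnj (x (2 * i + 2)) \<and>
      cnj (x (2 * i)) * c i 2 1 + cnj (x (2 * i + 1)) * c i 2 2 = z * cnj (x (left_state i))" ..
qed

lemma mat_pow_col_norm:
  assumes "2 * n \<le> N"
  shows "(\<Sum>j\<le>N. (cmod (mat_pow U n j 0))\<^sup>2) = 1"
  using assms
proof (induction n arbitrary: N)
  case 0
  show ?case by (simp add: mat_id_def if_distrib[of "\<lambda>x. (cmod x)\<^sup>2"] cong: if_cong)
next
  case (Suc n)
  define v where "v l = mat_pow U n l 0" for l
  define w where "w j = mat_pow U (Suc n) j 0" for j
  define M where "M = n + 2"
  have w_up: "w (2 * i) = c i 1 1 * v (2 * i + 2) + c i 2 1 * v (left_state i)" for i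
    unfolding w_def v_def mat_pow_qrw_Suc_left by (rule sum_qrw_U_up_row) simp
  have w_down: "w (2 * i + 1) = c i 1 2 * v (2 * i + 2) + c i 2 2 * v (left_state i)" for i
    unfolding w_def v_def mat_pow_qrw_Suc_left by (rule sum_qrw_U_down_row) simp
  have w_0: "2 * n + 2 < j \<Longrightarrow> w j = 0" for j unfolding w_def by (rule mat_pow_qrw_eq_0_left) simp
  have v_0: "2 * n < l \<Longrightarrow> v l = 0" for l unfolding v_def by (rule mat_pow_qrw_eq_0_left) simp
  have "(\<Sum>j\<le>N. (cmod (w j))\<^sup>2) = (\<Sum>j<2 * M. (cmod (w j))\<^sup>2)"
  proof -
    have "(\<Sum>j\<le>N. (cmod (w j))\<^sup>2) = (\<Sum>j\<le>2 * n + 2. (cmod (w j))\<^sup>2)"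
      by (rule sum.mono_neutral_right) (use w_0 Suc.prems in auto)
    also have "\<dots> = (\<Sum>j<2 * M. (cmod (w j))\<^sup>2)"
      by (rule sum.mono_neutral_left) (use w_0 in \<open>auto simp: M_def\<close>)
    finally show ?thesis .
  qed
  also have "\<dots> = (\<Sum>i<M. (cmod (w (2 * i)))\<^sup>2 + (cmod (w (2 * i + 1)))\<^sup>2)"
    by (rule sum_even_odd_pairs)
  also have "\<dots> = (\<Sum>i<M. (cmod (v (2 * i + 2)))\<^sup>2 + (cmod (v (left_state i)))\<^sup>2)"
    by (simp only: w_up w_down coin_norm_preserving)
  also have "\<dots> = (\<Sum>l\<le>2 * M. (cmod (v l))\<^sup>2)"
  proof -
    have "M \<ge> 1" and "v (2 * M - 1) = 0" using v_0 by (simp_all add: M_def)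
    then show ?thesis using sum_right_left_states[of M "\<lambda>l. (cmod (v l))\<^sup>2"] by simp
  qed
  also have "\<dots> = 1" unfolding v_def by (rule Suc.IH) (simp add: M_def)
  finally show ?case unfolding w_def .
qed

lemma left_eigvec_mat_pow:
  assumes "left_eigvec z r" "k + 2 * n \<le> N"
  shows "(\<Sum>j\<le>N. r j * mat_pow U n j k) = z ^ n * r k"
  using assms(2)
proof (induction n arbitrary: k N)
  case 0
  then show ?case by (simp add: mat_id_def if_distrib[of "\<lambda>x. _ * x"] cong: if_cong)
next
  case (Suc n)
  have "(\<Sum>j\<le>N. r j * mat_pow U (Suc n) j k) = (\<Sum>l\<le>k + 2. (\<Sum>j\<le>N. r j * mat_pow U n j l) * U l k)"
    by (simp only: mat_pow_qrw_Suc_right sum_distrib_left sum_distrib_right mult.assoc) (rule sum.swap)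
  also have "\<dots> = (\<Sum>l\<le>k + 2. z ^ n * r l * U l k)"
    by (rule sum.cong) (use Suc in auto)
  also have "\<dots> = z ^ n * (\<Sum>l\<le>k + 2. r l * U l k)"
    by (simp only: sum_distrib_left mult.assoc)
  also have "\<dots> = z ^ Suc n * r k" using assms(1) unfolding left_eigvec_iff by simp
  finally show ?case .
qed

end

locale qrw_limit = qrw +
  fixes X :: "nat \<Rightarrow> complex \<Rightarrow> complex"
    and \<theta> :: "nat \<Rightarrow> real"
    and Uinf :: cmat
  assumes X0: "\<And>z. X 0 z = 1"
    and Xeig: "\<And>j z. z \<noteq> 0 \<Longrightarrow> (\<Sum>\<^sub>\<infinity>l. qrw_U c j l * X l z) = z * X j z"
    and lim: "\<And>j k. (\<lambda>n. exp (- \<i> * of_real (\<theta> n)) * mat_pow (qrw_U c) n j k) \<longlonglongrightarrow> Uinf j k"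
    and nonnull: "Uinf \<noteq> (\<lambda>j k. 0)"
begin

definition phase :: "nat \<Rightarrow> complex" where
  "phase n = exp (- \<i> * of_real (\<theta> n))"

definition phase_step :: "nat \<Rightarrow> complex" where
  "phase_step n = exp (\<i> * of_real (\<theta> (Suc n) - \<theta> n))"

lemma phase_step_mult: "phase_step n * phase (Suc n) = phase n"
  unfolding phase_step_def phase_def by (simp add: exp_add[symmetric] algebra_simps)

lemma norm_phase [simp]: "cmod (phase n) = 1"
  unfolding phase_def by (simp add: norm_exp_i_times[of "- \<theta> n", simplified])

lemma phase_nonzero: "phase n \<noteq> 0"
  unfolding phase_def by simp

lemma norm_phase_step: "cmod (phase_step n) = 1"
  unfolding phase_step_def by (metis norm_exp_i_times of_real_diff)

lemma right_eigvec_X: "z \<noteq> 0 \<Longrightarrow> right_eigvec z (\<lambda>j. X j z)"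
  unfolding right_eigvec_iff using Xeig by (simp add: infsum_qrw_U_row)

lemma phase_pow_tendsto: "(\<lambda>n. phase n * mat_pow U n j k) \<longlonglongrightarrow> Uinf j k"
  using lim unfolding phase_def .

lemma phase_pow_Suc_tendsto_right:
  "(\<lambda>n. phase n * mat_pow U (Suc n) j k) \<longlonglongrightarrow> (\<Sum>l\<le>k + 2. Uinf j l * U l k)"
proof -
  have "(\<lambda>n. \<Sum>l\<le>k + 2. (phase n * mat_pow U n j l) * U l k) \<longlonglongrightarrow> (\<Sum>l\<le>k + 2. Uinf j l * U l k)"
    by (intro tendsto_intros phase_pow_tendsto)
  then show ?thesis
    by (simp only: mat_pow_qrw_Suc_right sum_distrib_left mult.assoc)
qed

lemma phase_pow_Suc_tendsto_left:
  "(\<lambda>n. phase n * mat_pow U (Suc n) j k) \<longlonglongrightarrow> (\<Sum>l\<le>j + 2. U j l * Uinf l k)"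
proof -
  have "(\<lambda>n. \<Sum>l\<le>j + 2. U j l * (phase n * mat_pow U n l k)) \<longlonglongrightarrow> (\<Sum>l\<le>j + 2. U j l * Uinf l k)"
    by (intro tendsto_intros phase_pow_tendsto)
  then show ?thesis
    by (simp only: mat_pow_qrw_Suc_left sum_distrib_left mult.left_commute)
qed

lemma phase_pow_Suc_eq: "phase n * mat_pow U (Suc n) j k = phase_step n * (phase (Suc n) * mat_pow U (Suc n) j k)"
  by (simp add: mult.assoc[symmetric] phase_step_mult)

lemma phase_step_convergent: "convergent phase_step"
proof -
  obtain j k where nz: "Uinf j k \<noteq> 0" using nonnull by (auto simp: fun_eq_iff)
  define s where "s n = phase (Suc n) * mat_pow U (Suc n) j k" for n
  have s_lim: "s \<longlonglongrightarrow> Uinf j k"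
    unfolding s_def by (rule LIMSEQ_Suc[OF phase_pow_tendsto])
  have "(\<lambda>n. phase n * mat_pow U (Suc n) j k / s n) \<longlonglongrightarrow> (\<Sum>l\<le>k + 2. Uinf j l * U l k) / Uinf j k"
    by (intro tendsto_divide phase_pow_Suc_tendsto_right s_lim nz)
  moreover have "eventually (\<lambda>n. s n \<noteq> 0) sequentially"
    using s_lim nz by (rule tendsto_imp_eventually_ne)
  then have "eventually (\<lambda>n. phase n * mat_pow U (Suc n) j k / s n = phase_step n) sequentially"
  proof eventually_elim
    case (elim n)
    then show ?case unfolding phase_pow_Suc_eq s_def by (rule nonzero_mult_div_cancel_right)
  qed
  ultimately have "phase_step \<longlonglongrightarrow> (\<Sum>l\<le>k + 2. Uinf j l * U l k) / Uinf j k"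
    by (rule Lim_transform_eventually)
  then show ?thesis unfolding convergent_def ..
qed

definition z0 :: complex where
  "z0 = lim phase_step"

lemma phase_step_tendsto: "phase_step \<longlonglongrightarrow> z0"
  unfolding z0_def by (rule convergent_LIMSEQ_iff[THEN iffD1, OF phase_step_convergent])

lemma norm_z0: "cmod z0 = 1"
proof -
  have "(\<lambda>n. cmod (phase_step n)) \<longlonglongrightarrow> cmod z0" by (intro tendsto_intros phase_step_tendsto)
  then show ?thesis by (simp add: norm_phase_step LIMSEQ_const_iff)
qed

lemma z0_nonzero: "z0 \<noteq> 0"
  using norm_z0 by auto

lemma phase_pow_Suc_tendsto: "(\<lambda>n. phase n * mat_pow U (Suc n) j k) \<longlonglongrightarrow> z0 * Uinf j k"
  unfolding phase_pow_Suc_eq by (intro tendsto_intros phase_step_tendsto LIMSEQ_Suc[OF phase_pow_tendsto])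

lemma Uinf_mult_U: "(\<Sum>l\<le>k + 2. Uinf j l * U l k) = z0 * Uinf j k"
  using phase_pow_Suc_tendsto_right phase_pow_Suc_tendsto by (rule LIMSEQ_unique)

lemma U_mult_Uinf: "(\<Sum>l\<le>j + 2. U j l * Uinf l k) = z0 * Uinf j k"
  using phase_pow_Suc_tendsto_left phase_pow_Suc_tendsto by (rule LIMSEQ_unique)

definition mu_inf :: complex where
  "mu_inf = Uinf 0 0"

lemma Uinf_eq: "Uinf j k = mu_inf * X j z0 * cnj (X k z0)"
proof -
  have cols: "right_eigvec z0 (\<lambda>j. Uinf j k)" for k
    unfolding right_eigvec_iff by (simp only: U_mult_Uinf) simp
  have col: "Uinf j k = Uinf 0 k * X j z0" for j k
    using right_eigvec_unique[OF z0_nonzero cols[of k] right_eigvec_X[OF z0_nonzero], of j] X0 by simp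
  have row0: "left_eigvec z0 (\<lambda>k. Uinf 0 k)"
    unfolding left_eigvec_iff by (simp only: Uinf_mult_U) simp
  have row: "Uinf 0 k = Uinf 0 0 * cnj (X k z0)" for k
    using left_eigvec_unique[OF z0_nonzero row0 right_eigvec_cnj[OF norm_z0 right_eigvec_X[OF z0_nonzero]], of k] X0
    by simp
  show ?thesis using col[of j k] row[of k] unfolding mu_inf_def by simp
qed

lemma mu_inf_nonzero: "mu_inf \<noteq> 0"
proof
  assume "mu_inf = 0"
  then have "Uinf = (\<lambda>j k. 0)" by (intro ext) (simp add: Uinf_eq)
  with nonnull show False by contradiction
qed

end

lemma LIMSEQ_approximation:
  fixes a :: "nat \<Rightarrow> 'a::metric_space"
  assumes b: "\<And>N. (\<lambda>n. b N n) \<longlonglongrightarrow> L"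
    and approx: "\<And>N n. dist (a n) (b N n) \<le> e N"
    and e: "e \<longlonglongrightarrow> 0"
  shows "a \<longlonglongrightarrow> L"
proof (rule tendstoI)
  fix \<epsilon> :: real
  assume "\<epsilon> > 0"
  then have "eventually (\<lambda>N. e N < \<epsilon> / 2) sequentially"
    by (intro order_tendstoD(2)[OF e]) simp
  then obtain N where N: "e N < \<epsilon> / 2" by (auto simp: eventually_sequentially)
  have "eventually (\<lambda>n. dist (b N n) L < \<epsilon> / 2) sequentially"
    by (intro tendstoD[OF b]) (use \<open>\<epsilon> > 0\<close> in simp)
  then show "eventually (\<lambda>n. dist (a n) L < \<epsilon>) sequentially"
  proof eventually_elim
    case (elim n)
    have "dist (a n) L \<le> dist (a n) (b N n) + dist (b N n) L" by (rule dist_triangle)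
    with approx[of n N] N elim show ?case by linarith
  qed
qed

locale qrw_measure = qrw_limit +
  fixes M :: "complex measure"
  assumes prob: "prob_space M"
    and sets_M: "sets M = sets borel"
    and on_T: "emeasure M (sphere 0 1) = 1"
    and moments: "\<And>n::int. integral\<^sup>L M (\<lambda>z. z powi n) = mat_ipow (qrw_U c) n 0 0"
begin

lemma measurable_M_iff: "f \<in> borel_measurable M \<longleftrightarrow> f \<in> borel_measurable borel"
  by (rule measurable_cong_sets[OF sets_M refl, THEN arg_cong[of _ _ "\<lambda>S. f \<in> S"]])

lemma AE_norm_eq_1: "AE z in M. cmod z = 1"
proof -
  interpret prob_space M by (rule prob)
  have sphere: "sphere 0 1 \<in> sets M" unfolding sets_M by simp
  have "measure M (sphere 0 1) = 1" using on_T by (simp add: measure_def)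
  then have "AE z in M. z \<in> sphere 0 1" using AE_in_set_eq_1[OF sphere] by simp
  then show ?thesis by (rule AE_mp) (simp add: AE_I2)
qed

lemma integrable_bounded:
  fixes f :: "complex \<Rightarrow> complex"
  assumes "f \<in> borel_measurable borel" "AE z in M. cmod (f z) \<le> B"
  shows "integrable M f"
proof -
  interpret prob_space M by (rule prob)
  show ?thesis using assms by (intro integrable_const_bound) (auto simp: measurable_M_iff)
qed

lemma borel_measurable_power: "(\<lambda>z::complex. z ^ n) \<in> borel_measurable borel"
  by (intro borel_measurable_continuous_onI continuous_intros)

lemma integrable_power: "integrable M (\<lambda>z. z ^ n)"
proof (rule integrable_bounded[where B = 1])
  show "AE z in M. cmod (z ^ n) \<le> 1"
    using AE_norm_eq_1 by (rule AE_mp) (simp add: AE_I2 norm_power)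
qed (rule borel_measurable_power)

definition moment :: "nat \<Rightarrow> complex" where
  "moment n = integral\<^sup>L M (\<lambda>z. z ^ n)"

lemma moment_eq_mat_pow: "moment n = mat_pow U n 0 0"
  using moments[of "int n"] unfolding moment_def mat_ipow_def by simp

lemma phase_moment_tendsto: "(\<lambda>n. phase n * moment (n + m)) \<longlonglongrightarrow> z0 ^ m * mu_inf"
proof (induction m)
  case 0
  then show ?case using phase_pow_tendsto[of 0 0] by (simp add: moment_eq_mat_pow mu_inf_def)
next
  case (Suc m)
  have "(\<lambda>n. phase_step n * (phase (Suc n) * moment (Suc n + m))) \<longlonglongrightarrow> z0 * (z0 ^ m * mu_inf)"
    by (intro tendsto_mult phase_step_tendsto LIMSEQ_Suc[OF Suc.IH])
  then show ?case by (simp add: mult.assoc[symmetric] phase_step_mult)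
qed

definition mass :: real where
  "mass = measure M {z0}"

definition peak :: "nat \<Rightarrow> complex \<Rightarrow> complex" where
  "peak N z = ((1 + z * cnj z0) / 2) ^ N"

lemma z0_mult_cnj: "z0 * cnj z0 = 1"
  using complex_norm_square[of z0] norm_z0 by simp

lemma peak_z0: "peak N z0 = 1"
  unfolding peak_def using z0_mult_cnj by simp

lemma peak_eq_sum: "peak N z = (\<Sum>k\<le>N. of_nat (N choose k) * cnj z0 ^ k / 2 ^ N * z ^ k)"
proof -
  have "peak N z = (z * cnj z0 + 1) ^ N / 2 ^ N" unfolding peak_def by (simp add: power_divide add.commute)
  also have "\<dots> = (\<Sum>k\<le>N. of_nat (N choose k) * (z * cnj z0) ^ k) / 2 ^ N"
    by (simp add: binomial_ring)
  finally show ?thesis by (simp add: sum_divide_distrib power_mult_distrib algebra_simps)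
qed

lemma borel_measurable_peak: "peak N \<in> borel_measurable borel"
  unfolding peak_def by (intro borel_measurable_continuous_onI continuous_intros) simp

lemma norm_peak_base_less:
  assumes "cmod z = 1" "z \<noteq> z0"
  shows "cmod ((1 + z * cnj z0) / 2) < 1"
proof -
  define w where "w = z * cnj z0"
  have w1: "cmod w = 1" using assms(1) norm_z0 unfolding w_def by (simp add: norm_mult)
  have "w \<noteq> 1"
  proof
    assume "w = 1"
    then have "z * (cnj z0 * z0) = z0" unfolding w_def by (metis mult.assoc mult_1)
    then show False using z0_mult_cnj assms(2) by (simp add: mult.commute)
  qed
  then have "cmod (1 + w) \<noteq> cmod (1::complex) + cmod w"
    using norm_triangle_eq[of "1::complex" w] w1 by simp
  moreover have "cmod (1 + w) \<le> cmod (1::complex) + cmod w" by (rule norm_triangle_ineq)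
  ultimately show ?thesis using w1 unfolding w_def by (simp add: norm_divide)
qed

lemma norm_peak_le:
  assumes "cmod z = 1"
  shows "cmod (peak N z) \<le> 1"
proof -
  have "cmod (1 + z * cnj z0) \<le> 2"
    using norm_triangle_ineq[of 1 "z * cnj z0"] assms norm_z0 by (simp add: norm_mult)
  then show ?thesis unfolding peak_def norm_power by (intro power_le_one) (simp_all add: norm_divide)
qed

lemma peak_tendsto_indicator:
  assumes "cmod z = 1"
  shows "(\<lambda>N. peak N z) \<longlonglongrightarrow> indicator {z0} z"
proof (cases "z = z0")
  case True
  then show ?thesis by (simp add: peak_z0)
next
  case False
  then show ?thesis
    unfolding peak_def using norm_peak_base_less[OF assms False] by (simp add: LIMSEQ_power_zero)
qed

lemma phase_moment_peak_tendsto: "(\<lambda>n. phase n * integral\<^sup>L M (\<lambda>z. z ^ n * peak N z)) \<longlonglongrightarrow> mu_inf"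
proof -
  define a where "a k = of_nat (N choose k) * cnj z0 ^ k / 2 ^ N" for k
  have "integral\<^sup>L M (\<lambda>z. z ^ n * peak N z) = (\<Sum>k\<le>N. a k * moment (n + k))" for n
  proof -
    have "(\<lambda>z. z ^ n * peak N z) = (\<lambda>z. \<Sum>k\<le>N. a k * z ^ (n + k))"
      by (simp add: peak_eq_sum a_def sum_distrib_left power_add algebra_simps)
    then show ?thesis by (simp add: moment_def integrable_power)
  qed
  moreover have "(\<lambda>n. \<Sum>k\<le>N. a k * (phase n * moment (n + k))) \<longlonglongrightarrow> (\<Sum>k\<le>N. a k * (z0 ^ k * mu_inf))"
    by (intro tendsto_intros phase_moment_tendsto)
  moreover have "(\<Sum>k\<le>N. a k * (z0 ^ k * mu_inf)) = mu_inf * peak N z0"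
    by (simp add: peak_eq_sum a_def sum_distrib_left algebra_simps)
  ultimately show ?thesis by (simp add: peak_z0 sum_distrib_left algebra_simps)
qed

lemma borel_measurable_indicator_z0: "(indicator {z0} :: complex \<Rightarrow> complex) \<in> borel_measurable borel"
  by (rule borel_measurable_indicator) simp

lemma integral_power_indicator: "integral\<^sup>L M (\<lambda>z. z ^ n * indicator {z0} z) = z0 ^ n * of_real mass"
proof -
  have "space M = UNIV" using sets_eq_imp_space_eq[OF sets_M] by simp
  moreover have "(\<lambda>z. z ^ n * indicator {z0} z) = (\<lambda>z. indicator {z0} z *\<^sub>R z0 ^ n)"
    by (auto simp: indicator_def)
  ultimately show ?thesis by (simp add: mass_def scaleR_conv_of_real)
qed

definition peak_error :: "nat \<Rightarrow> real" where
  "peak_error N = integral\<^sup>L M (\<lambda>z. cmod (peak N z - indicator {z0} z))"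

lemma borel_measurable_peak_error_integrand:
  "(\<lambda>z. cmod (peak N z - indicator {z0} z)) \<in> borel_measurable M"
  unfolding measurable_M_iff
  by (rule measurable_compose[OF borel_measurable_diff[OF borel_measurable_peak borel_measurable_indicator_z0]
        borel_measurable_norm])

lemma peak_error_tendsto: "peak_error \<longlonglongrightarrow> 0"
proof -
  interpret prob_space M by (rule prob)
  have "(\<lambda>N. integral\<^sup>L M (\<lambda>z. cmod (peak N z - indicator {z0} z))) \<longlonglongrightarrow> integral\<^sup>L M (\<lambda>z. 0::real)"
  proof (rule integral_dominated_convergence[where w = "\<lambda>z. 2"])
    show "AE z in M. (\<lambda>N. cmod (peak N z - indicator {z0} z)) \<longlonglongrightarrow> 0"
      using AE_norm_eq_1 by (rule AE_mp)
        (auto intro!: AE_I2 tendsto_norm_zero LIM_zero peak_tendsto_indicator)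
    show "AE z in M. norm (cmod (peak N z - indicator {z0} z)) \<le> 2" for N
    proof -
      have "cmod (peak N z - indicator {z0} z) \<le> 1 + 1" if "cmod z = 1" for z
        using norm_triangle_ineq4[of "peak N z" "indicator {z0} z"] norm_peak_le[OF that, of N]
        by (simp add: indicator_def peak_z0)
      then show ?thesis using AE_norm_eq_1 by (rule_tac AE_mp) (auto intro!: AE_I2)
    qed
  qed (simp_all add: borel_measurable_peak_error_integrand)
  then show ?thesis unfolding peak_error_def by simp
qed

lemma dist_phase_moment_peak:
  "dist (phase n * (z0 ^ n * of_real mass)) (phase n * integral\<^sup>L M (\<lambda>z. z ^ n * peak N z)) \<le> peak_error N"
proof -
  have bounded: "AE z in M. cmod (z ^ n * f z) \<le> 1" if "\<And>z. cmod z = 1 \<Longrightarrow> cmod (f z) \<le> 1" for f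
    using AE_norm_eq_1 by (rule AE_mp) (auto intro!: AE_I2 simp: norm_mult norm_power that)
  have int_peak: "integrable M (\<lambda>z. z ^ n * peak N z)"
    by (intro integrable_bounded[where B = 1] bounded norm_peak_le borel_measurable_times
        borel_measurable_power borel_measurable_peak)
  have int_ind: "integrable M (\<lambda>z. z ^ n * indicator {z0} z)"
    by (intro integrable_bounded[where B = 1] bounded borel_measurable_times
        borel_measurable_power borel_measurable_indicator_z0) (simp add: indicator_def)
  have "dist (phase n * (z0 ^ n * of_real mass)) (phase n * integral\<^sup>L M (\<lambda>z. z ^ n * peak N z))
      = cmod (phase n * integral\<^sup>L M (\<lambda>z. z ^ n * peak N z) - phase n * (z0 ^ n * of_real mass))"
    by (rule dist_commute[THEN trans, OF dist_norm])
  also have "\<dots> = cmod (phase n * integral\<^sup>L M (\<lambda>z. z ^ n * peak N z - z ^ n * indicator {z0} z))"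
    by (simp only: Bochner_Integration.integral_diff[OF int_peak int_ind] integral_power_indicator
        right_diff_distrib)
  also have "\<dots> = cmod (integral\<^sup>L M (\<lambda>z. z ^ n * peak N z - z ^ n * indicator {z0} z))"
    by (simp add: norm_mult)
  also have "\<dots> \<le> integral\<^sup>L M (\<lambda>z. cmod (z ^ n * peak N z - z ^ n * indicator {z0} z))"
    by (rule integral_norm_bound)
  also have "\<dots> = peak_error N"
    unfolding peak_error_def
  proof (rule integral_cong_AE)
    show "(\<lambda>z. cmod (z ^ n * peak N z - z ^ n * indicator {z0} z)) \<in> borel_measurable M"
      unfolding measurable_M_iff
      by (intro measurable_compose[OF _ borel_measurable_norm] borel_measurable_diff borel_measurable_times
          borel_measurable_power borel_measurable_peak borel_measurable_indicator_z0)
    show "AE z in M. cmod (z ^ n * peak N z - z ^ n * indicator {z0} z) = cmod (peak N z - indicator {z0} z)"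
      using AE_norm_eq_1 by (rule AE_mp) (auto intro!: AE_I2 simp: norm_mult norm_power simp flip: right_diff_distrib)
  qed (rule borel_measurable_peak_error_integrand)
  finally show ?thesis .
qed

lemma phase_power_mass_tendsto: "(\<lambda>n. phase n * (z0 ^ n * of_real mass)) \<longlonglongrightarrow> mu_inf"
  by (rule LIMSEQ_approximation[OF phase_moment_peak_tendsto dist_phase_moment_peak peak_error_tendsto])

lemma mass_pos: "mass > 0"
proof -
  have "mass \<noteq> 0"
  proof
    assume "mass = 0"
    then have "(\<lambda>n. phase n * (z0 ^ n * of_real mass)) \<longlonglongrightarrow> 0" by simp
    with phase_power_mass_tendsto mu_inf_nonzero show False using LIMSEQ_unique by blast
  qed
  then show ?thesis unfolding mass_def by (simp add: order_less_le)
qed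

lemma phase_power_tendsto: "(\<lambda>n. phase n * z0 ^ n) \<longlonglongrightarrow> mu_inf / of_real mass"
proof -
  have "(\<lambda>n. phase n * (z0 ^ n * of_real mass) / of_real mass) \<longlonglongrightarrow> mu_inf / of_real mass"
    using mass_pos by (intro tendsto_divide phase_power_mass_tendsto tendsto_const) simp
  then show ?thesis using mass_pos by simp
qed

lemma normalized_tendsto:
  assumes "(\<lambda>n. phase n * s n) \<longlonglongrightarrow> L"
  shows "(\<lambda>n. inverse (z0 ^ n) * s n) \<longlonglongrightarrow> L * of_real mass / mu_inf"
proof -
  have "(\<lambda>n. phase n * s n / (phase n * z0 ^ n)) \<longlonglongrightarrow> L / (mu_inf / of_real mass)"
    using mu_inf_nonzero mass_pos by (intro tendsto_divide assms phase_power_tendsto) simp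
  moreover have "phase n * s n / (phase n * z0 ^ n) = inverse (z0 ^ n) * s n" for n
  proof -
    show ?thesis using phase_nonzero[of n] z0_nonzero by (simp add: field_simps)
  qed
  ultimately show ?thesis by simp
qed

lemma moment_normalized_tendsto: "(\<lambda>n. inverse (z0 ^ n) * moment n) \<longlonglongrightarrow> of_real mass"
  using normalized_tendsto[OF phase_moment_tendsto[of 0]] mu_inf_nonzero by simp

lemma mat_pow_normalized_tendsto:
  "(\<lambda>n. inverse (z0 ^ n) * mat_pow U n j k) \<longlonglongrightarrow> of_real mass * X j z0 * cnj (X k z0)"
  using normalized_tendsto[OF phase_pow_tendsto[of j k]] mu_inf_nonzero by (simp add: Uinf_eq ac_simps)

definition scaled_column :: "nat \<Rightarrow> nat \<Rightarrow> complex" where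
  "scaled_column m j = inverse (z0 ^ m) * mat_pow U m j 0"

lemma scaled_column_tendsto: "(\<lambda>m. scaled_column m j) \<longlonglongrightarrow> of_real mass * X j z0"
  using mat_pow_normalized_tendsto[of j 0] X0 unfolding scaled_column_def by simp

lemma scaled_column_norm:
  assumes "2 * m \<le> N"
  shows "(\<Sum>j\<le>N. (cmod (scaled_column m j))\<^sup>2) = 1"
  using mat_pow_col_norm[OF assms] norm_z0
  by (simp add: scaled_column_def norm_mult norm_inverse norm_power)

lemma scaled_column_inner_X:
  assumes "2 * m \<le> N"
  shows "(\<Sum>j\<le>N. cnj (X j z0) * scaled_column m j) = 1"
proof -
  have "(\<Sum>j\<le>N. cnj (X j z0) * mat_pow U m j 0) = z0 ^ m"
    using left_eigvec_mat_pow[OF right_eigvec_cnj[OF norm_z0 right_eigvec_X[OF z0_nonzero]], of 0 m N]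
      assms X0 by simp
  then have "inverse (z0 ^ m) * (\<Sum>j\<le>N. cnj (X j z0) * mat_pow U m j 0) = 1"
    using z0_nonzero by simp
  then show ?thesis by (simp add: scaled_column_def sum_distrib_left algebra_simps)
qed

lemma partial_norm_X_le: "(\<Sum>j\<le>K. (cmod (X j z0))\<^sup>2) \<le> 1 / mass\<^sup>2"
proof -
  have "(\<lambda>m. \<Sum>j\<le>K. (cmod (scaled_column m j))\<^sup>2) \<longlonglongrightarrow> (\<Sum>j\<le>K. (cmod (of_real mass * X j z0))\<^sup>2)"
    by (intro tendsto_intros scaled_column_tendsto)
  moreover have "(\<Sum>j\<le>K. (cmod (scaled_column m j))\<^sup>2) \<le> 1" if "K \<le> m" for m
  proof -
    have "(\<Sum>j\<le>K. (cmod (scaled_column m j))\<^sup>2) \<le> (\<Sum>j\<le>2 * m. (cmod (scaled_column m j))\<^sup>2)"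
      using that by (intro sum_mono2) auto
    then show ?thesis by (simp add: scaled_column_norm)
  qed
  ultimately have "(\<Sum>j\<le>K. (cmod (of_real mass * X j z0))\<^sup>2) \<le> 1"
    by (intro LIMSEQ_le_const2) auto
  then have "mass\<^sup>2 * (\<Sum>j\<le>K. (cmod (X j z0))\<^sup>2) \<le> 1"
    using mass_pos by (simp add: norm_mult power_mult_distrib sum_distrib_left)
  then show ?thesis using mass_pos by (simp add: field_simps)
qed

lemma summable_norm_X: "summable (\<lambda>j. (cmod (X j z0))\<^sup>2)"
proof (rule summableI_nonneg_bounded)
  show "(\<Sum>j<n. (cmod (X j z0))\<^sup>2) \<le> 1 / mass\<^sup>2" for n
    using sum_mono2[of "{..n}" "{..<n}" "\<lambda>j. (cmod (X j z0))\<^sup>2"] partial_norm_X_le[of n] by force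
qed simp

lemma norm_X_tail_bound:
  "(cmod (1 - of_real (mass * (\<Sum>j\<le>K. (cmod (X j z0))\<^sup>2))))\<^sup>2
     \<le> (\<Sum>j. (cmod (X j z0))\<^sup>2) - (\<Sum>j\<le>K. (cmod (X j z0))\<^sup>2)"
proof -
  define P where "P = (\<Sum>j\<le>K. (cmod (X j z0))\<^sup>2)"
  define S where "S = (\<Sum>j. (cmod (X j z0))\<^sup>2)"
  define F where "F m = (\<Sum>j\<le>K. cnj (X j z0) * scaled_column m j)" for m
  have "F \<longlonglongrightarrow> (\<Sum>j\<le>K. cnj (X j z0) * (of_real mass * X j z0))"
    unfolding F_def by (intro tendsto_intros scaled_column_tendsto)
  also have "(\<Sum>j\<le>K. cnj (X j z0) * (of_real mass * X j z0)) = of_real (mass * P)"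
  proof -
    have "cnj (X j z0) * (of_real mass * X j z0) = of_real (mass * (cmod (X j z0))\<^sup>2)" for j
      by (simp only: of_real_mult complex_norm_square) (simp only: mult_ac)
    then show ?thesis by (simp only: P_def sum_distrib_left of_real_sum)
  qed
  finally have "(\<lambda>m. (cmod (1 - F m))\<^sup>2) \<longlonglongrightarrow> (cmod (1 - of_real (mass * P)))\<^sup>2"
    by (intro tendsto_intros)
  moreover have "(cmod (1 - F m))\<^sup>2 \<le> S - P" if "K \<le> m" for m
  proof -
    define D where "D = {..2 * m} - {..K}"
    have split: "(\<Sum>j\<le>2 * m. f j) = (\<Sum>j\<in>D. f j) + (\<Sum>j\<le>K. f j)" for f :: "nat \<Rightarrow> 'b::comm_monoid_add"
      unfolding D_def using that by (intro sum.subset_diff) auto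
    have "1 - F m = (\<Sum>j\<in>D. cnj (X j z0) * scaled_column m j)"
      using split[of "\<lambda>j. cnj (X j z0) * scaled_column m j"] scaled_column_inner_X[of m "2 * m"]
      unfolding F_def by (simp add: diff_eq_eq)
    then have "cmod (1 - F m) \<le> (\<Sum>j\<in>D. cmod (X j z0) * cmod (scaled_column m j))"
      using norm_sum[of "\<lambda>j. cnj (X j z0) * scaled_column m j" D] by (simp add: norm_mult)
    then have "(cmod (1 - F m))\<^sup>2 \<le> (\<Sum>j\<in>D. cmod (X j z0) * cmod (scaled_column m j))\<^sup>2"
      by (simp add: power_mono)
    also have "\<dots> \<le> (\<Sum>j\<in>D. (cmod (X j z0))\<^sup>2) * (\<Sum>j\<in>D. (cmod (scaled_column m j))\<^sup>2)"
      by (rule Cauchy_Schwarz_ineq_sum)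
    also have "\<dots> \<le> (S - P) * 1"
    proof (intro mult_mono)
      show "(\<Sum>j\<in>D. (cmod (X j z0))\<^sup>2) \<le> S - P"
        using split[of "\<lambda>j. (cmod (X j z0))\<^sup>2"] sum_le_suminf[OF summable_norm_X, of "{..2 * m}"]
        unfolding S_def P_def by simp
      show "(\<Sum>j\<in>D. (cmod (scaled_column m j))\<^sup>2) \<le> 1"
        using split[of "\<lambda>j. (cmod (scaled_column m j))\<^sup>2"] scaled_column_norm[of m "2 * m"]
          sum_nonneg[of "{..K}" "\<lambda>j. (cmod (scaled_column m j))\<^sup>2"] by simp
    qed (use sum_le_suminf[OF summable_norm_X, of "{..K}"] in \<open>simp_all add: sum_nonneg S_def P_def\<close>)
    finally show ?thesis by simp
  qed
  ultimately show ?thesis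
    unfolding P_def[symmetric] S_def[symmetric] by (intro LIMSEQ_le_const2) auto
qed

lemma mass_mult_suminf_norm_X: "mass * (\<Sum>j. (cmod (X j z0))\<^sup>2) = 1"
proof -
  define S where "S = (\<Sum>j. (cmod (X j z0))\<^sup>2)"
  have partial: "(\<lambda>K. \<Sum>j\<le>K. (cmod (X j z0))\<^sup>2) \<longlonglongrightarrow> S"
    unfolding S_def by (rule summable_LIMSEQ'[OF summable_norm_X])
  have "(\<lambda>K. (cmod (1 - of_real (mass * (\<Sum>j\<le>K. (cmod (X j z0))\<^sup>2))))\<^sup>2)
      \<longlonglongrightarrow> (cmod (1 - of_real (mass * S)))\<^sup>2"
    by (intro tendsto_intros partial)
  moreover have "(\<lambda>K. S - (\<Sum>j\<le>K. (cmod (X j z0))\<^sup>2)) \<longlonglongrightarrow> S - S"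
    by (intro tendsto_intros partial)
  ultimately have "(cmod (1 - of_real (mass * S)))\<^sup>2 \<le> S - S"
    using norm_X_tail_bound unfolding S_def by (intro tendsto_le[OF trivial_limit_sequentially]) auto
  then have "(of_real (mass * S) :: complex) = 1" by simp
  then show ?thesis unfolding S_def by (metis of_real_eq_1_iff)
qed

lemma norm_X_sums: "(\<lambda>j. (cmod (X j z0))\<^sup>2) sums (1 / mass)"
proof -
  have "(\<Sum>j. (cmod (X j z0))\<^sup>2) = 1 / mass"
    using mass_mult_suminf_norm_X mass_pos by (simp add: field_simps)
  then show ?thesis using summable_sums[OF summable_norm_X] by simp
qed

lemma summable_on_cnj_X_mult:
  assumes "in_l2 v"
  shows "(\<lambda>k. cnj (X k z0) * v k) summable_on UNIV"
proof (rule norm_summable_imp_summable_on)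
  have "summable (\<lambda>k. ((cmod (X k z0))\<^sup>2 + (cmod (v k))\<^sup>2) / 2)"
    using summable_norm_X assms unfolding in_l2_def by (intro summable_divide summable_add)
  then show "summable (\<lambda>k. cmod (cnj (X k z0) * v k))"
  proof (rule summable_comparison_test')
    show "norm (cmod (cnj (X k z0) * v k)) \<le> ((cmod (X k z0))\<^sup>2 + (cmod (v k))\<^sup>2) / 2" for k
      using sum_squares_bound[of "cmod (X k z0)" "cmod (v k)"] by (simp add: norm_mult)
  qed
qed

lemma in_l2_scaled_X: "in_l2 (\<lambda>j. a * X j z0)"
  unfolding in_l2_def using summable_mult[OF summable_norm_X, of "(cmod a)\<^sup>2"]
  by (simp add: norm_mult power_mult_distrib)

lemma mat_apply_scaled_X: "mat_apply U (\<lambda>j. a * X j z0) = (\<lambda>j. z0 * (a * X j z0))"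
proof
  fix j
  have eig: "(\<Sum>l\<le>j + 2. U j l * X l z0) = z0 * X j z0"
    using right_eigvec_X[OF z0_nonzero] unfolding right_eigvec_iff by blast
  have "mat_apply U (\<lambda>j. a * X j z0) j = a * (\<Sum>l\<le>j + 2. U j l * X l z0)"
    unfolding mat_apply_def infsum_qrw_U_row by (simp only: sum_distrib_left mult.left_commute)
  then show "mat_apply U (\<lambda>j. a * X j z0) j = z0 * (a * X j z0)"
    by (simp only: eig mult.left_commute)
qed

lemma eigenspace_eq_multiples: "w \<in> eigenspace_l2 U z0 \<Longrightarrow> w j = w 0 * X j z0"
  unfolding eigenspace_l2_def mat_apply_def
  by (intro right_eigvec_unique[OF z0_nonzero _ right_eigvec_X[OF z0_nonzero]] X0)
    (simp add: right_eigvec_iff infsum_qrw_U_row fun_eq_iff)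

lemma is_orth_proj_onto_eigenspace:
  "is_orth_proj_onto (\<lambda>j k. of_real mass * X j z0 * cnj (X k z0)) (eigenspace_l2 U z0)"
  unfolding is_orth_proj_onto_def
proof (intro allI impI conjI ballI)
  fix v assume v: "in_l2 v"
  define a where "a = (\<Sum>\<^sub>\<infinity>k. cnj (X k z0) * v k)"
  have Pv: "mat_apply (\<lambda>j k. of_real mass * X j z0 * cnj (X k z0)) v = (\<lambda>j. (of_real mass * a) * X j z0)"
  proof
    fix j
    have "mat_apply (\<lambda>j k. of_real mass * X j z0 * cnj (X k z0)) v j
        = (\<Sum>\<^sub>\<infinity>k. (of_real mass * X j z0) * (cnj (X k z0) * v k))"
      unfolding mat_apply_def by (simp add: mult.assoc)
    also have "\<dots> = (of_real mass * a) * X j z0"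
      unfolding a_def infsum_cmult_right' by (simp add: ac_simps)
    finally show "mat_apply (\<lambda>j k. of_real mass * X j z0 * cnj (X k z0)) v j = (of_real mass * a) * X j z0" .
  qed
  show "mat_apply (\<lambda>j k. of_real mass * X j z0 * cnj (X k z0)) v \<in> eigenspace_l2 U z0"
    unfolding Pv eigenspace_l2_def using in_l2_scaled_X mat_apply_scaled_X by simp
  fix w assume w: "w \<in> eigenspace_l2 U z0"
  have "((\<lambda>j. (cmod (X j z0))\<^sup>2) has_sum (1 / mass)) UNIV"
    by (intro sums_nonneg_imp_has_sum norm_X_sums) simp
  then have "((\<lambda>j. of_real ((cmod (X j z0))\<^sup>2) :: complex) has_sum of_real (1 / mass)) UNIV"
    by (simp only: has_sum_of_real_iff)
  then have "((\<lambda>j. X j z0 * cnj (X j z0)) has_sum of_real (1 / mass)) UNIV"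
    by (simp only: complex_norm_square)
  then have "((\<lambda>j. cnj (w 0) * (cnj (X j z0) * v j) + (- cnj (w 0) * of_real mass * a) * (X j z0 * cnj (X j z0)))
      has_sum (cnj (w 0) * a + (- cnj (w 0) * of_real mass * a) * of_real (1 / mass))) UNIV"
    unfolding a_def by (intro has_sum_add has_sum_cmult_right has_sum_infsum summable_on_cnj_X_mult v)
  moreover have "cnj (w 0) * a + (- cnj (w 0) * of_real mass * a) * of_real (1 / mass) = 0"
    using mass_pos by simp
  moreover have "(v j - mat_apply (\<lambda>j k. of_real mass * X j z0 * cnj (X k z0)) v j) * cnj (w j)
      = cnj (w 0) * (cnj (X j z0) * v j) + (- cnj (w 0) * of_real mass * a) * (X j z0 * cnj (X j z0))" for j
    unfolding Pv eigenspace_eq_multiples[OF w, of j] by (simp add: algebra_simps)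
  ultimately have "((\<lambda>j. (v j - mat_apply (\<lambda>j k. of_real mass * X j z0 * cnj (X k z0)) v j) * cnj (w j))
      has_sum 0) UNIV"
    by simp
  then show "(\<Sum>\<^sub>\<infinity>j. (v j - mat_apply (\<lambda>j k. of_real mass * X j z0 * cnj (X k z0)) v j) * cnj (w j)) = 0"
    by (rule infsumI)
qed

end

theorem proposition2:
  fixes c :: "nat \<Rightarrow> nat \<Rightarrow> nat \<Rightarrow> complex"
    and M :: "complex measure"
    and X :: "nat \<Rightarrow> complex \<Rightarrow> complex"
    and \<theta> :: "nat \<Rightarrow> real"
    and Uinf :: cmat
  assumes coins: "\<And>i. unitary_coin (c i)"
    and nontriv: "\<And>i. c i 1 1 \<noteq> 0"
    and prob: "prob_space M"
    and sets_M: "sets M = sets borel"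
    and on_T: "emeasure M (sphere 0 1) = 1"
    and moments: "\<And>n::int. integral\<^sup>L M (\<lambda>z. z powi n) = mat_ipow (qrw_U c) n 0 0"
    and X0: "\<And>z. X 0 z = 1"
    and Xeig: "\<And>j z. z \<noteq> 0 \<Longrightarrow> (\<Sum>\<^sub>\<infinity>l. qrw_U c j l * X l z) = z * X j z"
    and lim: "\<And>j k. (\<lambda>n. exp (- \<i> * of_real (\<theta> n)) * mat_pow (qrw_U c) n j k) \<longlonglongrightarrow> Uinf j k"
    and nonnull: "Uinf \<noteq> (\<lambda>j k. 0)"
  shows "\<exists>z0. cmod z0 = 1 \<and> measure M {z0} > 0
          \<and> (\<lambda>n. exp (\<i> * of_real (\<theta> (Suc n) - \<theta> n))) \<longlonglongrightarrow> z0
          \<and> (\<exists>\<mu>inf.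
               (\<lambda>n. exp (- \<i> * of_real (\<theta> n)) * integral\<^sup>L M (\<lambda>z. z ^ n)) \<longlonglongrightarrow> \<mu>inf
             \<and> (\<forall>j k. Uinf j k = \<mu>inf * X j z0 * cnj (X k z0))
             \<and> (\<lambda>n. exp (- \<i> * of_real (\<theta> n)) * z0 ^ n) \<longlonglongrightarrow> \<mu>inf / complex_of_real (measure M {z0}))
          \<and> (\<lambda>n. inverse (z0 ^ n) * integral\<^sup>L M (\<lambda>z. z ^ n)) \<longlonglongrightarrow> complex_of_real (measure M {z0})
          \<and> (\<forall>j k. (\<lambda>n. inverse (z0 ^ n) * mat_pow (qrw_U c) n j k)
                  \<longlonglongrightarrow> complex_of_real (measure M {z0}) * X j z0 * cnj (X k z0))
          \<and> (\<lambda>j. (cmod (X j z0))\<^sup>2) sums (1 / measure M {z0})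
          \<and> is_orth_proj_onto (\<lambda>j k. complex_of_real (measure M {z0}) * X j z0 * cnj (X k z0))
               (eigenspace_l2 (qrw_U c) z0)"
proof -
  interpret qrw_measure c X \<theta> Uinf M
    by (intro qrw_measure.intro qrw_limit.intro qrw.intro qrw_limit_axioms.intro qrw_measure_axioms.intro)
      (fact assms)+
  have "\<exists>\<mu>inf. (\<lambda>n. exp (- \<i> * of_real (\<theta> n)) * integral\<^sup>L M (\<lambda>z. z ^ n)) \<longlonglongrightarrow> \<mu>inf
             \<and> (\<forall>j k. Uinf j k = \<mu>inf * X j z0 * cnj (X k z0))
             \<and> (\<lambda>n. exp (- \<i> * of_real (\<theta> n)) * z0 ^ n) \<longlonglongrightarrow> \<mu>inf / complex_of_real (measure M {z0})"
    using phase_moment_tendsto[of 0] Uinf_eq phase_power_tendsto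
    by (intro exI[of _ mu_inf]) (simp add: phase_def moment_def mass_def)
  then show ?thesis
    using norm_z0 mass_pos phase_step_tendsto moment_normalized_tendsto mat_pow_normalized_tendsto
      norm_X_sums is_orth_proj_onto_eigenspace
    unfolding phase_step_def[abs_def] moment_def mass_def by blast
qed

end
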